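(* Let $R$ be a QNA with Goodearl–Yakimov elements $y_1,\ldots,y_N$, let $j\in[1,N]$, $r\in R_j$ and $w\in R$ with $rw\in y_jR$. If $r\notin y_jR_j$, then $w\in y_jR$.
   Context: ${\mathbb K}$ is a field of characteristic $0$. A quantum nilpotent algebra (QNA) is an iterated Ore extension $R={\mathbb K}[x_1][x_2;\sigma_2,\delta_2]\cdots[x_N;\sigma_N,\delta_N]$, where $R_k={\mathbb K}[x_1][x_2;\sigma_2,\delta_2]\cdots[x_k;\sigma_k,\delta_k]$ ($R_0={\mathbb K}$), $\sigma_k$ is a ${\mathbb K}$-automorphism and $\delta_k$ a $\sigma_k$-derivation of $R_{k-1}$, together with a torus $\mathcal H$ acting rationally by ${\mathbb K}$-automorphisms on $R$ with each $x_i$ an $\mathcal H$-eigenvector, such that: (i) $\sigma_k(x_j)=\lambda_{kj}x_j$ for $j<k$, with $\lambda_{kj}\in{\mathbb K}^*$; (ii) $\delta_k$ is locally nilpotent on $R_{k-1}$; (iii) for each $k$ there exist $h_k\in\mathcal H$ and $q_k\in{\mathbb K}^*$ not a root of unity such that $h_k$ acts on $R_{k-1}$ as $\sigma_k$ and $h_k\cdot x_k=q_kx_k$. The rank is $n=|\{k:\delta_k=0\}|$ and $\mathcal H=({\mathbb K}^* )^n$ is taken maximal. Homogeneous elements are the $\mathcal H$-eigenvectors. An element $u$ is normal if $uR=Ru$; a prime element is a nonzero normal $p$ with $pR$ a completely prime ideal. Goodearl–Yakimov elements: there is a surjective map $\mu:[1,N]\to[1,n]$ with predecessor $p(k)=\max\{j<k:\mu(j)=\mu(k)\}$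 (or $-\infty$ if none) and successor $s(k)=\min\{j>k:\mu(j)=\mu(k)\}$ (or $+\infty$ if none), and homogeneous elements $y_1,\ldots,y_N\in R$, uniquely determined, with $y_k=x_k$ if $p(k)=-\infty$ and $y_k=y_{p(k)}x_k-c_k$ for some $c_k\in R_{k-1}$ otherwise, such that for every $k$ the set $\{y_j: j\le k,\ s(j)>k\}$ is, up to nonzero scalars, the set of homogeneous prime elements of $R_k$. Note $y_j\in R_j$. The $y_i$ pairwise quasi-commute. *)

theory Defs
  imports Main
begin

(* The ground field K is a type 'k :: field_char_0, embedded into the centre of
   the algebra R (the whole type 'a :: ring_1) via the structure map sc. *)

definition K_alg :: "('k::field_char_0 \<Rightarrow> 'a::ring_1) \<Rightarrow> bool" where
  "K_alg sc \<longleftrightarrow> inj sc \<and> sc 0 = 0 \<and> sc 1 = 1 \<and>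
     (\<forall>a b. sc (a + b) = sc a + sc b) \<and> (\<forall>a b. sc (a * b) = sc a * sc b) \<and>
     (\<forall>c r. sc c * r = r * sc c)"

definition mono :: "(nat \<Rightarrow> 'a::ring_1) \<Rightarrow> nat \<Rightarrow> (nat \<Rightarrow> nat) \<Rightarrow> 'a" where
  "mono x k a = prod_list (map (\<lambda>i. x i ^ a i) [1..<Suc k])"

definition Rk :: "('k::field_char_0 \<Rightarrow> 'a::ring_1) \<Rightarrow> (nat \<Rightarrow> 'a) \<Rightarrow> nat \<Rightarrow> 'a set" where
  "Rk sc x k = {r. \<exists>A c. finite A \<and> r = (\<Sum>a\<in>A. sc (c a) * mono x k a)}"

(* the torus H = K-star to the n, elements represented as functions nat => K,
   nonzero on [1,n] and equal to 1 elsewhere *)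
definition torus :: "nat \<Rightarrow> (nat \<Rightarrow> 'k::field_char_0) set" where
  "torus n = {h. (\<forall>i\<in>{1..n}. h i \<noteq> 0) \<and> (\<forall>i. i \<notin> {1..n} \<longrightarrow> h i = 1)}"

definition K_alg_auto_on ::
  "('k::field_char_0 \<Rightarrow> 'a::ring_1) \<Rightarrow> 'a set \<Rightarrow> ('a \<Rightarrow> 'a) \<Rightarrow> bool" where
  "K_alg_auto_on sc S f \<longleftrightarrow> bij_betw f S S \<and>
     (\<forall>a\<in>S. \<forall>b\<in>S. f (a + b) = f a + f b \<and> f (a * b) = f a * f b) \<and>
     (\<forall>c. f (sc c) = sc c)"

definition torus_action ::
  "('k::field_char_0 \<Rightarrow> 'a::ring_1) \<Rightarrow> (nat \<Rightarrow> 'a) \<Rightarrow> nat \<Rightarrow> nat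
     \<Rightarrow> ((nat \<Rightarrow> 'k) \<Rightarrow> 'a \<Rightarrow> 'a) \<Rightarrow> bool" where
  "torus_action sc x N n act \<longleftrightarrow>
     (\<forall>h\<in>torus n. K_alg_auto_on sc UNIV (act h)) \<and>
     act (\<lambda>_. 1) = id \<and>
     (\<forall>h\<in>torus n. \<forall>h'\<in>torus n. act (\<lambda>i. h i * h' i) = act h \<circ> act h') \<and>
     (\<forall>i\<in>{1..N}. \<exists>m :: nat \<Rightarrow> int. \<forall>h\<in>torus n.
        act h (x i) = sc (\<Prod>l\<in>{1..n}. power_int (h l) (m l)) * x i)"

definition homogeneous ::
  "('k::field_char_0 \<Rightarrow> 'a::ring_1) \<Rightarrow> nat \<Rightarrow> ((nat \<Rightarrow> 'k) \<Rightarrow> 'a \<Rightarrow> 'a) \<Rightarrow> 'a \<Rightarrow> bool" where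
  "homogeneous sc n act u \<longleftrightarrow> u \<noteq> 0 \<and> (\<forall>h\<in>torus n. \<exists>c. act h u = sc c * u)"

definition prime_elem_in :: "'a::ring_1 set \<Rightarrow> 'a \<Rightarrow> bool" where
  "prime_elem_in S u \<longleftrightarrow> u \<in> S \<and> u \<noteq> 0 \<and>
     (\<lambda>t. u * t) ` S = (\<lambda>t. t * u) ` S \<and>
     (\<lambda>t. u * t) ` S \<noteq> S \<and>
     (\<forall>a\<in>S. \<forall>b\<in>S. a * b \<in> (\<lambda>t. u * t) ` S \<longrightarrow>
        a \<in> (\<lambda>t. u * t) ` S \<or> b \<in> (\<lambda>t. u * t) ` S)"

definition ore_rank :: "('k::field_char_0 \<Rightarrow> 'a::ring_1) \<Rightarrow> (nat \<Rightarrow> 'a) \<Rightarrow> nat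
     \<Rightarrow> (nat \<Rightarrow> 'a \<Rightarrow> 'a) \<Rightarrow> nat" where
  "ore_rank sc x N \<delta> = card {k\<in>{1..N}. \<forall>r\<in>Rk sc x (k - 1). \<delta> k r = 0}"

(* Quantum nilpotent algebra: R (= UNIV :: 'a set) is the iterated Ore extension
   K[x_1][x_2;s_2,d_2]...[x_N;s_N,d_N], presented internally: the ordered monomials
   in x_1..x_N form a K-basis of R, and x_k r = s_k(r) x_k + d_k(r) for r in R_{k-1},
   with s_k a K-algebra automorphism and d_k a K-linear s_k-derivation of R_{k-1};
   together with conditions (i)-(iii) for the torus action act of H = K-star to the n,
   n the rank. *)
definition QNA :: "('k::field_char_0 \<Rightarrow> 'a::ring_1) \<Rightarrow> (nat \<Rightarrow> 'a) \<Rightarrow> nat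
     \<Rightarrow> (nat \<Rightarrow> 'a \<Rightarrow> 'a) \<Rightarrow> (nat \<Rightarrow> 'a \<Rightarrow> 'a) \<Rightarrow> ((nat \<Rightarrow> 'k) \<Rightarrow> 'a \<Rightarrow> 'a) \<Rightarrow> bool" where
  "QNA sc x N \<sigma> \<delta> act \<longleftrightarrow>
     K_alg sc \<and>
     (\<forall>r. r \<in> Rk sc x N) \<and>
     (\<forall>A c. finite A \<longrightarrow> (\<forall>a\<in>A. \<forall>i. i \<notin> {1..N} \<longrightarrow> a i = 0) \<longrightarrow>
        (\<Sum>a\<in>A. sc (c a) * mono x N a) = 0 \<longrightarrow> (\<forall>a\<in>A. c a = 0)) \<and>
     (\<forall>k\<in>{1..N}.
        K_alg_auto_on sc (Rk sc x (k - 1)) (\<sigma> k) \<and>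
        (\<forall>r\<in>Rk sc x (k - 1). \<delta> k r \<in> Rk sc x (k - 1)) \<and>
        (\<forall>a\<in>Rk sc x (k - 1). \<forall>b\<in>Rk sc x (k - 1).
            \<delta> k (a + b) = \<delta> k a + \<delta> k b \<and>
            \<delta> k (a * b) = \<sigma> k a * \<delta> k b + \<delta> k a * b) \<and>
        (\<forall>c. \<forall>a\<in>Rk sc x (k - 1). \<delta> k (sc c * a) = sc c * \<delta> k a) \<and>
        (\<forall>r\<in>Rk sc x (k - 1). x k * r = \<sigma> k r * x k + \<delta> k r) \<and>
        (\<forall>j\<in>{1..<k}. \<exists>lam. lam \<noteq> 0 \<and> \<sigma> k (x j) = sc lam * x j) \<and>
        (\<forall>r\<in>Rk sc x (k - 1). \<exists>m. (\<delta> k ^^ m) r = 0) \<and>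
        (\<exists>h\<in>torus (ore_rank sc x N \<delta>). \<exists>q.
            (\<forall>r\<in>Rk sc x (k - 1). act h r = \<sigma> k r) \<and> act h (x k) = sc q * x k \<and>
            (\<forall>m::nat. m > 0 \<longrightarrow> q ^ m \<noteq> 1))) \<and>
     torus_action sc x N (ore_rank sc x N \<delta>) act"

(* predecessor p(k) (None = -infinity) and successor s(k) (None = +infinity) *)
definition pred_mu :: "(nat \<Rightarrow> nat) \<Rightarrow> nat \<Rightarrow> nat option" where
  "pred_mu \<mu> k = (if {j. 1 \<le> j \<and> j < k \<and> \<mu> j = \<mu> k} = {} then None
                  else Some (Max {j. 1 \<le> j \<and> j < k \<and> \<mu> j = \<mu> k}))"

definition succ_mu :: "(nat \<Rightarrow> nat) \<Rightarrow> nat \<Rightarrow> nat \<Rightarrow> nat option" where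
  "succ_mu \<mu> N k = (if {j. k < j \<and> j \<le> N \<and> \<mu> j = \<mu> k} = {} then None
                  else Some (Min {j. k < j \<and> j \<le> N \<and> \<mu> j = \<mu> k}))"

definition succ_gt :: "(nat \<Rightarrow> nat) \<Rightarrow> nat \<Rightarrow> nat \<Rightarrow> nat \<Rightarrow> bool" where
  "succ_gt \<mu> N j k \<longleftrightarrow> (case succ_mu \<mu> N j of None \<Rightarrow> True | Some s \<Rightarrow> k < s)"

definition GY_elements :: "('k::field_char_0 \<Rightarrow> 'a::ring_1) \<Rightarrow> (nat \<Rightarrow> 'a) \<Rightarrow> nat
     \<Rightarrow> nat \<Rightarrow> ((nat \<Rightarrow> 'k) \<Rightarrow> 'a \<Rightarrow> 'a) \<Rightarrow> (nat \<Rightarrow> nat) \<Rightarrow> (nat \<Rightarrow> 'a) \<Rightarrow> bool" where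
  "GY_elements sc x N n act \<mu> y \<longleftrightarrow>
     \<mu> ` {1..N} = {1..n} \<and>
     (\<forall>k\<in>{1..N}.
        homogeneous sc n act (y k) \<and>
        (pred_mu \<mu> k = None \<longrightarrow> y k = x k) \<and>
        (\<forall>p. pred_mu \<mu> k = Some p \<longrightarrow> (\<exists>c\<in>Rk sc x (k - 1). y k = y p * x k - c))) \<and>
     (\<forall>k\<in>{1..N}. \<forall>u\<in>Rk sc x k.
        (homogeneous sc n act u \<and> prime_elem_in (Rk sc x k) u) \<longleftrightarrow>
        (\<exists>j c. 1 \<le> j \<and> j \<le> k \<and> succ_gt \<mu> N j k \<and> c \<noteq> 0 \<and> u = sc c * y j))"

end

theory Submission
  imports Defs
begin

text \<open>R is a free left R_j-module on the monomials in x_(j+1), ..., x_N, because every ordered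
monomial of R splits uniquely as a monomial of R_j times such a tail monomial. Write
w = \<Sum> b_t T_t and y_j v = r w = \<Sum> r b_t T_t with v = \<Sum> d_t T_t; comparing coefficients gives
r b_t = y_j d_t in R_j. As y_j is completely prime in R_j and r \<notin> y_j R_j, every b_t lies in
y_j R_j, so w \<in> y_j R.\<close>

lemma K_alg_simps:
  assumes "K_alg sc"
  shows K_alg_zero: "sc 0 = 0" and K_alg_one: "sc 1 = 1"
    and K_alg_add: "sc (a + b) = sc a + sc b" and K_alg_mult: "sc (a * b) = sc a * sc b"
  using assms unfolding K_alg_def by blast+

lemma K_alg_uminus:
  assumes K: "K_alg sc" shows "sc (- c) = - sc c"
proof -
  have "sc (- c) + sc c = 0" using K_alg_add[OF K, of "- c" c] K_alg_zero[OF K] by simp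
  thus ?thesis by (simp add: eq_neg_iff_add_eq_0)
qed

lemma K_alg_sum:
  assumes K: "K_alg sc" shows "sc (sum f I) = (\<Sum>i\<in>I. sc (f i))"
  by (induct I rule: infinite_finite_induct) (simp_all add: K_alg_simps[OF K])

lemma Rk_induct [consumes 1, case_names zero add mono]:
  assumes "v \<in> Rk sc x k" "P 0" "\<And>u v. P u \<Longrightarrow> P v \<Longrightarrow> P (u + v)"
    "\<And>c a. P (sc c * mono x k a)"
  shows "P v"
proof -
  obtain A c where A: "finite A" "v = (\<Sum>a\<in>A. sc (c a) * mono x k a)"
    using assms(1) unfolding Rk_def by auto
  have "P (\<Sum>a\<in>B. sc (c a) * mono x k a)" if "finite B" for B
    using that by (induct rule: finite_induct) (auto intro: assms(2-4))
  thus ?thesis using A by simp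
qed

lemma Rk_zero: "0 \<in> Rk sc x k"
  unfolding Rk_def by (rule CollectI, rule exI[of _ "{}"]) auto

lemma Rk_add:
  assumes K: "K_alg sc" and u: "u \<in> Rk sc x k" and v: "v \<in> Rk sc x k"
  shows "u + v \<in> Rk sc x k"
proof -
  obtain A c where A: "finite A" "u = (\<Sum>a\<in>A. sc (c a) * mono x k a)"
    using u unfolding Rk_def by auto
  obtain B d where B: "finite B" "v = (\<Sum>a\<in>B. sc (d a) * mono x k a)"
    using v unfolding Rk_def by auto
  define e where "e a = (if a \<in> A then c a else 0) + (if a \<in> B then d a else 0)" for a
  have fin: "finite (A \<union> B)" using A B by simp
  have "u = (\<Sum>a\<in>A \<union> B. if a \<in> A then sc (c a) * mono x k a else 0)"
    unfolding A(2) sum.inter_restrict[OF fin, symmetric] by (simp add: Int_absorb1)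
  moreover have "v = (\<Sum>a\<in>A \<union> B. if a \<in> B then sc (d a) * mono x k a else 0)"
    unfolding B(2) sum.inter_restrict[OF fin, symmetric] by (simp add: Int_absorb1)
  moreover have "sc (e a) * mono x k a = (if a \<in> A then sc (c a) * mono x k a else 0)
      + (if a \<in> B then sc (d a) * mono x k a else 0)" for a
    by (cases "a \<in> A"; cases "a \<in> B") (simp_all add: e_def K_alg_simps[OF K] distrib_right)
  ultimately have "u + v = (\<Sum>a\<in>A \<union> B. sc (e a) * mono x k a)"
    by (simp only: sum.distrib)
  thus ?thesis unfolding Rk_def using fin by (intro CollectI exI conjI)
qed

lemma Rk_scale:
  assumes K: "K_alg sc" and v: "v \<in> Rk sc x k"
  shows "sc c * v \<in> Rk sc x k"
proof -
  obtain A d where A: "finite A" "v = (\<Sum>a\<in>A. sc (d a) * mono x k a)"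
    using v unfolding Rk_def by auto
  have "sc c * v = (\<Sum>a\<in>A. sc (c * d a) * mono x k a)"
    using A K_alg_simps[OF K] by (simp add: sum_distrib_left mult.assoc)
  thus ?thesis unfolding Rk_def using A(1) by (intro CollectI exI conjI)
qed

lemma Rk_diff:
  assumes K: "K_alg sc" and u: "u \<in> Rk sc x k" and v: "v \<in> Rk sc x k"
  shows "u - v \<in> Rk sc x k"
proof -
  have "u - v = u + sc (- 1) * v" by (simp add: K_alg_uminus[OF K] K_alg_one[OF K])
  also have "\<dots> \<in> Rk sc x k" by (rule Rk_add[OF K u Rk_scale[OF K v]])
  finally show ?thesis .
qed

lemma Rk_sum:
  assumes K: "K_alg sc" and "finite I" and "\<And>i. i \<in> I \<Longrightarrow> f i \<in> Rk sc x k"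
  shows "sum f I \<in> Rk sc x k"
  using assms(2,3) by (induct rule: finite_induct) (auto intro: Rk_zero Rk_add[OF K])

lemma mono_in_Rk:
  assumes K: "K_alg sc" shows "mono x k a \<in> Rk sc x k"
  unfolding Rk_def
  by (rule CollectI, rule exI[of _ "{a}"], rule exI[of _ "\<lambda>_. 1"]) (simp add: K_alg_one[OF K])

lemma mono_Suc: "mono x (Suc k) a = mono x k a * x (Suc k) ^ a (Suc k)"
  unfolding mono_def by simp

lemma mono_cong: "(\<And>i. i \<in> {1..k} \<Longrightarrow> a i = b i) \<Longrightarrow> mono x k a = mono x k b"
  unfolding mono_def by (intro arg_cong[where f = prod_list] map_cong) auto

lemma Rk_mult_x_power:
  assumes K: "K_alg sc" and b: "b \<in> Rk sc x k"
  shows "b * x (Suc k) ^ n \<in> Rk sc x (Suc k)"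
  using b
proof (induct rule: Rk_induct)
  case zero show ?case by (simp add: Rk_zero)
next
  case (add u v) then show ?case by (simp add: distrib_right Rk_add[OF K])
next
  case (mono c a)
  have "mono x k a = mono x k (a(Suc k := n))" by (rule mono_cong) auto
  hence "mono x k a * x (Suc k) ^ n = mono x (Suc k) (a(Suc k := n))" by (simp add: mono_Suc)
  then show ?case using Rk_scale[OF K mono_in_Rk[OF K]] by (simp add: mult.assoc)
qed

lemma Rk_Suc_induct [consumes 2, case_names zero add x_power]:
  assumes "K_alg sc" "v \<in> Rk sc x (Suc k)" "P 0" "\<And>u v. P u \<Longrightarrow> P v \<Longrightarrow> P (u + v)"
    "\<And>b n. b \<in> Rk sc x k \<Longrightarrow> P (b * x (Suc k) ^ n)"
  shows "P v"
  using assms(2)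
proof (induct rule: Rk_induct)
  case (mono c a)
  have "sc c * mono x (Suc k) a = (sc c * mono x k a) * x (Suc k) ^ a (Suc k)"
    by (simp add: mono_Suc mult.assoc)
  then show ?case using assms(5)[OF Rk_scale[OF assms(1) mono_in_Rk[OF assms(1)]]] by simp
qed (fact assms(3), rule assms(4))

lemma Rk_mono:
  assumes K: "K_alg sc" and "i \<le> k" "b \<in> Rk sc x i"
  shows "b \<in> Rk sc x k"
  using assms(2,3)
proof (induct k)
  case (Suc k)
  then show ?case using Rk_mult_x_power[OF K, of _ x k 0] by (auto simp: le_Suc_eq)
qed simp

lemma x_in_Rk:
  assumes K: "K_alg sc" shows "x (Suc k) \<in> Rk sc x (Suc k)"
proof -
  have "mono x k (\<lambda>_. 0) = 1" by (induct k) (simp_all add: mono_Suc, simp add: mono_def)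
  thus ?thesis using Rk_mult_x_power[OF K mono_in_Rk[OF K], of x k "\<lambda>_. 0" 1] by simp
qed

definition ore_step :: "('k::field_char_0 \<Rightarrow> 'a::ring_1) \<Rightarrow> (nat \<Rightarrow> 'a) \<Rightarrow> ('a \<Rightarrow> 'a)
    \<Rightarrow> ('a \<Rightarrow> 'a) \<Rightarrow> nat \<Rightarrow> bool" where
  "ore_step sc x s d m \<longleftrightarrow>
     (\<forall>r\<in>Rk sc x m. s r \<in> Rk sc x m \<and> d r \<in> Rk sc x m \<and> x (Suc m) * r = s r * x (Suc m) + d r)"

lemma x_power_mult_Rk:
  assumes K: "K_alg sc" and step: "ore_step sc x s d m" and v: "v \<in> Rk sc x (Suc m)"
  shows "x (Suc m) ^ n * v \<in> Rk sc x (Suc m)"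
proof (induct n)
  case (Suc n)
  have "x (Suc m) * u \<in> Rk sc x (Suc m)" if "u \<in> Rk sc x (Suc m)" for u
    using K that
  proof (induct rule: Rk_Suc_induct)
    case zero show ?case by (simp add: Rk_zero)
  next
    case (add u v) then show ?case by (simp add: distrib_left Rk_add[OF K])
  next
    case (x_power b n)
    have "x (Suc m) * (b * x (Suc m) ^ n) = s b * x (Suc m) ^ Suc n + d b * x (Suc m) ^ n"
      using step x_power unfolding ore_step_def by (simp add: mult.assoc[symmetric] distrib_right)
    also have "\<dots> \<in> Rk sc x (Suc m)"
      using step x_power unfolding ore_step_def by (blast intro: Rk_add[OF K] Rk_mult_x_power[OF K])
    finally show ?case .
  qed
  then show ?case using Suc by (simp add: mult.assoc)
qed (simp add: v)

lemma Rk_mult_closed: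
  assumes K: "K_alg sc" and steps: "\<And>m. Suc m \<le> N \<Longrightarrow> ore_step sc x (\<sigma> (Suc m)) (\<delta> (Suc m)) m"
    and "k \<le> N" and "u \<in> Rk sc x k" and "v \<in> Rk sc x k"
  shows "u * v \<in> Rk sc x k"
  using assms(3-5)
proof (induct k arbitrary: u v)
  case 0
  have "mono x 0 a = 1" for a unfolding mono_def by simp
  with 0(2) show ?case
    by (induct rule: Rk_induct) (simp_all add: Rk_zero distrib_right Rk_add[OF K] Rk_scale[OF K 0(3)])
next
  case (Suc m)
  have left: "b * w \<in> Rk sc x (Suc m)" if b: "b \<in> Rk sc x m" and w: "w \<in> Rk sc x (Suc m)" for b w
    using K w
  proof (induct rule: Rk_Suc_induct)
    case zero show ?case by (simp add: Rk_zero)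
  next
    case (add u1 u2) then show ?case by (simp add: distrib_left Rk_add[OF K])
  next
    case (x_power b' n)
    have "b * b' \<in> Rk sc x m" using Suc b x_power by simp
    then show ?case using Rk_mult_x_power[OF K, of "b * b'"] by (simp add: mult.assoc)
  qed
  from K Suc(3) show ?case
  proof (induct rule: Rk_Suc_induct)
    case zero show ?case by (simp add: Rk_zero)
  next
    case (add u1 u2) then show ?case by (simp add: distrib_right Rk_add[OF K])
  next
    case (x_power b n)
    have "b * x (Suc m) ^ n * v = b * (x (Suc m) ^ n * v)" by (simp add: mult.assoc)
    then show ?case using left[OF x_power x_power_mult_Rk[OF K steps[OF Suc(2)] Suc(4)]] by simp
  qed
qed

definition tail_monomial :: "(nat \<Rightarrow> 'a::ring_1) \<Rightarrow> nat \<Rightarrow> nat \<Rightarrow> (nat \<Rightarrow> nat) \<Rightarrow> 'a" where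
  "tail_monomial x j N t = prod_list (map (\<lambda>i. x i ^ t i) [Suc j..<Suc N])"

definition tail_exps :: "nat \<Rightarrow> nat \<Rightarrow> (nat \<Rightarrow> nat) \<Rightarrow> nat \<Rightarrow> nat" where
  "tail_exps j N a = (\<lambda>i. if j < i \<and> i \<le> N then a i else 0)"

definition head_exps :: "nat \<Rightarrow> (nat \<Rightarrow> nat) \<Rightarrow> nat \<Rightarrow> nat" where
  "head_exps j a = (\<lambda>i. if 1 \<le> i \<and> i \<le> j then a i else 0)"

lemma tail_exps_idem: "tail_exps j N (tail_exps j N a) = tail_exps j N a"
  unfolding tail_exps_def by auto

lemma head_exps_idem: "head_exps j (head_exps j a) = head_exps j a"
  unfolding head_exps_def by auto

lemma tail_exps_fixed_iff: "tail_exps j N a = a \<longleftrightarrow> (\<forall>i. \<not> (j < i \<and> i \<le> N) \<longrightarrow> a i = 0)"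
  unfolding tail_exps_def fun_eq_iff by auto

lemma head_exps_fixed_iff: "head_exps j a = a \<longleftrightarrow> (\<forall>i. \<not> (1 \<le> i \<and> i \<le> j) \<longrightarrow> a i = 0)"
  unfolding head_exps_def fun_eq_iff by auto

lemma exps_merge:
  assumes "head_exps j a = a" and "tail_exps j N t = t"
  shows tail_exps_merge: "tail_exps j N (\<lambda>i. a i + t i) = t"
    and head_exps_merge: "head_exps j (\<lambda>i. a i + t i) = a"
  using assms unfolding tail_exps_fixed_iff head_exps_fixed_iff
  by (auto simp: tail_exps_def head_exps_def fun_eq_iff)

lemma mono_split:
  assumes "j \<le> N" shows "mono x N a = mono x j a * tail_monomial x j N (tail_exps j N a)"
proof -
  have split: "[1..<Suc N] = [1..<Suc j] @ [Suc j..<Suc N]"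
    using upt_add_eq_append[of 1 "Suc j" "N - j"] assms by simp
  have tail: "map (\<lambda>i. x i ^ a i) [Suc j..<Suc N] = map (\<lambda>i. x i ^ tail_exps j N a i) [Suc j..<Suc N]"
    by (rule map_cong) (auto simp: tail_exps_def)
  show ?thesis unfolding mono_def tail_monomial_def split tail[symmetric] by simp
qed

lemma mono_merge:
  assumes "j \<le> N" and "head_exps j a = a" and "tail_exps j N t = t"
  shows "mono x j a * tail_monomial x j N t = mono x N (\<lambda>i. a i + t i)"
proof -
  have "mono x j (\<lambda>i. a i + t i) = mono x j a"
    using assms(3) unfolding tail_exps_fixed_iff by (intro mono_cong) auto
  thus ?thesis using mono_split[OF assms(1), of x "\<lambda>i. a i + t i"] tail_exps_merge[OF assms(2,3)]
    by simp
qed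

lemma Rk_tail_decomposition:
  assumes K: "K_alg sc" and jN: "j \<le> N" and w: "w \<in> Rk sc x N"
  obtains S b where "finite S" "\<forall>t\<in>S. tail_exps j N t = t" "\<forall>t. b t \<in> Rk sc x j"
    "\<forall>t. t \<notin> S \<longrightarrow> b t = 0" "w = (\<Sum>t\<in>S. b t * tail_monomial x j N t)"
proof -
  obtain A c where A: "finite A" "w = (\<Sum>a\<in>A. sc (c a) * mono x N a)"
    using w unfolding Rk_def by auto
  define S where "S = tail_exps j N ` A"
  define b where "b t = (\<Sum>a | a \<in> A \<and> tail_exps j N a = t. sc (c a) * mono x j a)" for t
  have "w = (\<Sum>a\<in>A. sc (c a) * mono x j a * tail_monomial x j N (tail_exps j N a))"
    unfolding A(2) by (rule sum.cong) (simp_all add: mono_split[OF jN] mult.assoc)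
  also have "\<dots> = (\<Sum>t\<in>S. \<Sum>a | a \<in> A \<and> tail_exps j N a = t.
      sc (c a) * mono x j a * tail_monomial x j N (tail_exps j N a))"
    by (rule sum.group[symmetric]) (use A in \<open>auto simp: S_def\<close>)
  also have "\<dots> = (\<Sum>t\<in>S. b t * tail_monomial x j N t)"
    unfolding b_def sum_distrib_right by (rule sum.cong) (auto intro: sum.cong)
  finally have w_eq: "w = (\<Sum>t\<in>S. b t * tail_monomial x j N t)" .
  have b_Rk: "\<forall>t. b t \<in> Rk sc x j" unfolding b_def
    by (intro allI Rk_sum[OF K] Rk_scale[OF K] mono_in_Rk[OF K]) (use A in auto)
  have "b t = 0" if "t \<notin> S" for t
  proof -
    have "{a. a \<in> A \<and> tail_exps j N a = t} = {}" using that unfolding S_def by auto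
    thus ?thesis unfolding b_def by (simp only: sum.empty)
  qed
  moreover have "finite S" "\<forall>t\<in>S. tail_exps j N t = t"
    using A(1) unfolding S_def by (auto simp: tail_exps_idem)
  ultimately show thesis using that b_Rk w_eq by blast
qed

lemma Rk_head_normal_form:
  assumes K: "K_alg sc" and v: "v \<in> Rk sc x k"
  obtains A c where "finite A" "\<forall>a\<in>A. head_exps k a = a" "v = (\<Sum>a\<in>A. sc (c a) * mono x k a)"
proof -
  obtain A c where A: "finite A" "v = (\<Sum>a\<in>A. sc (c a) * mono x k a)"
    using v unfolding Rk_def by auto
  define B where "B = head_exps k ` A"
  define c' where "c' b = (\<Sum>a | a \<in> A \<and> head_exps k a = b. c a)" for b
  have mono_head: "mono x k (head_exps k a) = mono x k a" for a
    by (rule mono_cong) (auto simp: head_exps_def)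
  have "v = (\<Sum>b\<in>B. \<Sum>a | a \<in> A \<and> head_exps k a = b. sc (c a) * mono x k a)"
    unfolding A(2) by (rule sum.group[symmetric]) (use A in \<open>auto simp: B_def\<close>)
  also have "\<dots> = (\<Sum>b\<in>B. sc (c' b) * mono x k b)"
    unfolding c'_def K_alg_sum[OF K] sum_distrib_right
    by (rule sum.cong) (auto intro!: sum.cong simp: mono_head)
  finally have "v = (\<Sum>b\<in>B. sc (c' b) * mono x k b)" .
  moreover have "finite B" "\<forall>b\<in>B. head_exps k b = b"
    using A(1) unfolding B_def by (auto simp: head_exps_idem)
  ultimately show thesis using that by blast
qed

definition monomials_independent :: "('k::field_char_0 \<Rightarrow> 'a::ring_1) \<Rightarrow> (nat \<Rightarrow> 'a) \<Rightarrow> nat \<Rightarrow> bool" where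
  "monomials_independent sc x N \<longleftrightarrow>
     (\<forall>A c. finite A \<longrightarrow> (\<forall>a\<in>A. \<forall>i. i \<notin> {1..N} \<longrightarrow> a i = 0) \<longrightarrow>
        (\<Sum>a\<in>A. sc (c a) * mono x N a) = 0 \<longrightarrow> (\<forall>a\<in>A. c a = 0))"

lemma tail_coefficients_unique:
  assumes K: "K_alg sc" and jN: "j \<le> N" and indep: "monomials_independent sc x N"
    and S: "finite S" "\<forall>t\<in>S. tail_exps j N t = t" and e: "\<forall>t\<in>S. e t \<in> Rk sc x j"
    and zero: "(\<Sum>t\<in>S. e t * tail_monomial x j N t) = 0"
    and s: "s \<in> S"
  shows "e s = 0"
proof -
  have "\<forall>t\<in>S. \<exists>A c. finite A \<and> (\<forall>a\<in>A. head_exps j a = a) \<and>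
      e t = (\<Sum>a\<in>A. sc (c a) * mono x j a)"
    using Rk_head_normal_form[OF K] e by metis
  then obtain A c where A: "\<And>t. t \<in> S \<Longrightarrow> finite (A t)"
    "\<And>t a. t \<in> S \<Longrightarrow> a \<in> A t \<Longrightarrow> head_exps j a = a"
    "\<And>t. t \<in> S \<Longrightarrow> e t = (\<Sum>a\<in>A t. sc (c t a) * mono x j a)"
    by metis
  \<comment> \<open>A head monomial times a tail monomial is the ordered monomial of R whose exponent
    vector is the sum, and both factors are recovered from it; so independence in R applies.\<close>
  define merge where "merge p = (\<lambda>i. snd p i + fst p i)" for p :: "(nat \<Rightarrow> nat) \<times> (nat \<Rightarrow> nat)"
  define C where "C b = c (tail_exps j N b) (head_exps j b)" for b
  have merge_parts: "tail_exps j N (merge p) = fst p" "head_exps j (merge p) = snd p"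
    if "p \<in> Sigma S A" for p
    using that exps_merge[OF A(2)] S(2) unfolding merge_def by auto
  have inj: "inj_on merge (Sigma S A)"
    by (rule inj_onI) (metis merge_parts prod.expand)
  have "0 = (\<Sum>t\<in>S. \<Sum>a\<in>A t. sc (c t a) * mono x N (merge (t, a)))"
    unfolding zero[symmetric]
  proof (rule sum.cong[OF refl])
    fix t assume t: "t \<in> S"
    show "e t * tail_monomial x j N t = (\<Sum>a\<in>A t. sc (c t a) * mono x N (merge (t, a)))"
      unfolding A(3)[OF t] sum_distrib_right merge_def
      by (rule sum.cong[OF refl]) (use t S(2) in \<open>simp add: mult.assoc mono_merge[OF jN A(2)]\<close>)
  qed
  also have "\<dots> = (\<Sum>p\<in>Sigma S A. sc (C (merge p)) * mono x N (merge p))"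
    by (subst sum.Sigma) (use S(1) A(1) in \<open>auto intro!: sum.cong simp: C_def merge_parts\<close>)
  also have "\<dots> = (\<Sum>b\<in>merge ` Sigma S A. sc (C b) * mono x N b)"
    by (simp add: sum.reindex[OF inj])
  finally have "(\<Sum>b\<in>merge ` Sigma S A. sc (C b) * mono x N b) = 0" by simp
  moreover have "\<forall>b\<in>merge ` Sigma S A. \<forall>i. i \<notin> {1..N} \<longrightarrow> b i = 0"
    using jN A(2) S(2) unfolding merge_def head_exps_fixed_iff tail_exps_fixed_iff by fastforce
  moreover have "finite (merge ` Sigma S A)" using S(1) A(1) by auto
  ultimately have C0: "\<forall>b\<in>merge ` Sigma S A. C b = 0"
    using indep unfolding monomials_independent_def by blast
  have "c s a = 0" if "a \<in> A s" for a
    using C0 merge_parts[of "(s, a)"] s that unfolding C_def by force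
  thus ?thesis unfolding A(3)[OF s] by (simp add: K_alg_zero[OF K])
qed

lemma principal_cancellation_lift:
  assumes K: "K_alg sc" and indep: "monomials_independent sc x N" and top: "\<forall>z. z \<in> Rk sc x N"
    and jN: "j \<le> N" and mult: "\<And>a b. a \<in> Rk sc x j \<Longrightarrow> b \<in> Rk sc x j \<Longrightarrow> a * b \<in> Rk sc x j"
    and u: "u \<in> Rk sc x j" and r: "r \<in> Rk sc x j"
    and cancel: "\<And>b. b \<in> Rk sc x j \<Longrightarrow> r * b \<in> (\<lambda>t. u * t) ` Rk sc x j \<Longrightarrow>
      b \<in> (\<lambda>t. u * t) ` Rk sc x j"
    and rw: "r * w \<in> (\<lambda>t. u * t) ` UNIV"
  shows "w \<in> (\<lambda>t. u * t) ` UNIV"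
proof -
  obtain v where v: "r * w = u * v" using rw by blast
  obtain S1 b where S1: "finite S1" "\<forall>t\<in>S1. tail_exps j N t = t" "\<forall>t. b t \<in> Rk sc x j"
    "\<forall>t. t \<notin> S1 \<longrightarrow> b t = 0" "w = (\<Sum>t\<in>S1. b t * tail_monomial x j N t)"
    using Rk_tail_decomposition[OF K jN] top by blast
  obtain S2 d where S2: "finite S2" "\<forall>t\<in>S2. tail_exps j N t = t" "\<forall>t. d t \<in> Rk sc x j"
    "\<forall>t. t \<notin> S2 \<longrightarrow> d t = 0" "v = (\<Sum>t\<in>S2. d t * tail_monomial x j N t)"
    using Rk_tail_decomposition[OF K jN] top by blast
  define S where "S = S1 \<union> S2"
  have S: "finite S" "\<forall>t\<in>S. tail_exps j N t = t" using S1 S2 unfolding S_def by auto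
  have w: "w = (\<Sum>t\<in>S. b t * tail_monomial x j N t)"
    unfolding S1(5) S_def by (rule sum.mono_neutral_left) (use S1 S2 in auto)
  have "v = (\<Sum>t\<in>S. d t * tail_monomial x j N t)"
    unfolding S2(5) S_def by (rule sum.mono_neutral_left) (use S1 S2 in auto)
  with v w have "(\<Sum>t\<in>S. (r * b t - u * d t) * tail_monomial x j N t) = 0"
    by (simp add: sum_distrib_left sum_subtractf left_diff_distrib mult.assoc)
  moreover have "\<forall>t\<in>S. r * b t - u * d t \<in> Rk sc x j"
    using Rk_diff[OF K] mult r u S1(3) S2(3) by blast
  ultimately have "r * b t = u * d t" if "t \<in> S" for t
    using tail_coefficients_unique[OF K jN indep S] that by fastforce
  hence "\<forall>t\<in>S. \<exists>g. b t = u * g" using cancel S1(3) S2(3) by blast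
  then obtain g where g: "\<forall>t\<in>S. b t = u * g t" by metis
  have "w = u * (\<Sum>t\<in>S. g t * tail_monomial x j N t)"
    unfolding w sum_distrib_left by (rule sum.cong) (simp_all add: g mult.assoc)
  thus ?thesis by blast
qed

lemma QNA_K_alg: "QNA sc x N \<sigma> \<delta> act \<Longrightarrow> K_alg sc"
  unfolding QNA_def by (rule conjunct1)

lemma QNA_Rk_top: "QNA sc x N \<sigma> \<delta> act \<Longrightarrow> \<forall>z. z \<in> Rk sc x N"
  unfolding QNA_def by (drule conjunct2, rule conjunct1)

lemma QNA_monomials_independent: "QNA sc x N \<sigma> \<delta> act \<Longrightarrow> monomials_independent sc x N"
  unfolding QNA_def monomials_independent_def by (drule conjunct2, drule conjunct2, rule conjunct1)

lemma QNA_ore_step: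
  assumes Q: "QNA sc x N \<sigma> \<delta> act" and m: "Suc m \<le> N"
  shows "ore_step sc x (\<sigma> (Suc m)) (\<delta> (Suc m)) m"
proof -
  have "Suc m \<in> {1..N}" using m by simp
  note step = Q[unfolded QNA_def, THEN conjunct2, THEN conjunct2, THEN conjunct2, THEN conjunct1,
      rule_format, OF this, unfolded diff_Suc_1]
  have "bij_betw (\<sigma> (Suc m)) (Rk sc x m) (Rk sc x m)" "\<forall>r\<in>Rk sc x m. \<delta> (Suc m) r \<in> Rk sc x m"
    "\<forall>r\<in>Rk sc x m. x (Suc m) * r = \<sigma> (Suc m) r * x (Suc m) + \<delta> (Suc m) r"
    using step unfolding K_alg_auto_on_def by blast+
  thus ?thesis unfolding ore_step_def by (auto dest: bij_betw_apply)
qed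

lemma pred_mu_SomeD:
  assumes "pred_mu \<mu> k = Some p" shows "1 \<le> p" "p < k"
proof -
  define P where "P = {j. 1 \<le> j \<and> j < k \<and> \<mu> j = \<mu> k}"
  have "P \<noteq> {}" "p = Max P" using assms unfolding pred_mu_def P_def by (auto split: if_splits)
  moreover have "finite P" unfolding P_def by (rule finite_subset[of _ "{..<k}"]) auto
  ultimately have "p \<in> P" by simp
  thus "1 \<le> p" "p < k" unfolding P_def by auto
qed

lemma succ_gt_self: "succ_gt \<mu> N j j"
proof -
  define P where "P = {i. j < i \<and> i \<le> N \<and> \<mu> i = \<mu> j}"
  have "finite P" unfolding P_def by (rule finite_subset[of _ "{..N}"]) auto
  hence "Min P \<in> P" if "P \<noteq> {}" using that by simp
  hence "P \<noteq> {} \<Longrightarrow> j < Min P" unfolding P_def by blast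
  thus ?thesis unfolding succ_gt_def succ_mu_def P_def by simp
qed

lemma GY_in_Rk:
  assumes K: "K_alg sc" and GY: "GY_elements sc x N n act \<mu> y" and "k \<in> {1..N}"
  shows "y k \<in> Rk sc x k"
  using assms(3)
proof (induct k rule: less_induct)
  case (less k)
  then obtain m where k: "k = Suc m" by (cases k) auto
  have y_def: "pred_mu \<mu> k = None \<longrightarrow> y k = x k"
    "\<forall>p. pred_mu \<mu> k = Some p \<longrightarrow> (\<exists>c\<in>Rk sc x (k - 1). y k = y p * x k - c)"
    using GY less(2) unfolding GY_elements_def by blast+
  show ?case
  proof (cases "pred_mu \<mu> k")
    case None then show ?thesis using y_def(1) x_in_Rk[OF K] k by simp
  next
    case (Some p)
    note p = pred_mu_SomeD[OF Some]
    obtain c where c: "c \<in> Rk sc x m" "y k = y p * x k - c" using y_def(2) Some k by auto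
    have "y p \<in> Rk sc x m" using less(1)[OF p(2)] p less(2) k Rk_mono[OF K, of p m] by auto
    hence "y p * x k ^ 1 \<in> Rk sc x k" using Rk_mult_x_power[OF K] k by blast
    moreover have "c \<in> Rk sc x k" using Rk_mono[OF K _ c(1)] k by simp
    ultimately show ?thesis using c(2) Rk_diff[OF K] by simp
  qed
qed

lemma GY_prime_in_Rk:
  assumes K: "K_alg sc" and GY: "GY_elements sc x N n act \<mu> y" and k: "k \<in> {1..N}"
  shows "prime_elem_in (Rk sc x k) (y k)"
proof -
  have "\<exists>j c. 1 \<le> j \<and> j \<le> k \<and> succ_gt \<mu> N j k \<and> c \<noteq> 0 \<and> y k = sc c * y j"
    using k succ_gt_self[of \<mu> N k] K_alg_one[OF K] by (intro exI[of _ k] exI[of _ 1]) simp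
  thus ?thesis using GY k GY_in_Rk[OF K GY k] unfolding GY_elements_def by blast
qed

theorem lemmaA1:
  fixes sc :: "'k::field_char_0 \<Rightarrow> 'a::ring_1"
    and x :: "nat \<Rightarrow> 'a" and N :: nat
    and \<sigma> \<delta> :: "nat \<Rightarrow> 'a \<Rightarrow> 'a"
    and act :: "(nat \<Rightarrow> 'k) \<Rightarrow> 'a \<Rightarrow> 'a"
    and \<mu> :: "nat \<Rightarrow> nat" and y :: "nat \<Rightarrow> 'a"
    and j :: nat and r w :: 'a
  assumes "QNA sc x N \<sigma> \<delta> act"
    and "GY_elements sc x N (ore_rank sc x N \<delta>) act \<mu> y"
    and "j \<in> {1..N}"
    and "r \<in> Rk sc x j"
    and "r * w \<in> (\<lambda>t. y j * t) ` UNIV"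
    and "r \<notin> (\<lambda>t. y j * t) ` Rk sc x j"
  shows "w \<in> (\<lambda>t. y j * t) ` UNIV"
proof (rule principal_cancellation_lift)
  show K: "K_alg sc" using QNA_K_alg[OF assms(1)] .
  show "monomials_independent sc x N" using QNA_monomials_independent[OF assms(1)] .
  show "\<forall>z. z \<in> Rk sc x N" using QNA_Rk_top[OF assms(1)] .
  show "j \<le> N" using assms(3) by simp
  show "a * b \<in> Rk sc x j" if "a \<in> Rk sc x j" "b \<in> Rk sc x j" for a b
    using Rk_mult_closed[OF K QNA_ore_step[OF assms(1)] \<open>j \<le> N\<close> that] .
  show "y j \<in> Rk sc x j" using GY_in_Rk[OF K assms(2,3)] .
  show "b \<in> (\<lambda>t. y j * t) ` Rk sc x j"
    if "b \<in> Rk sc x j" "r * b \<in> (\<lambda>t. y j * t) ` Rk sc x j" for b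
    using GY_prime_in_Rk[OF K assms(2,3)] assms(4,6) that unfolding prime_elem_in_def by blast
qed (fact assms)+

end
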